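(* Let $\alpha=(\alpha_1,\dots,\alpha_n)$ and $\beta=(\beta_1,\dots,\beta_n)$ be two probability vectors on $n$ points (in the paper $\alpha_i=P_F(u_i\mid s)$, $\beta_i=P_F(v_i\mid s')$), and let $\mathbf{C}'\in\mathbb{R}^{n\times n}$ be a diagonal matrix with $\mathbf{C}'_{ii}\le 0$ for all $i$. Then $$\min_{\pi\in\Pi(\alpha,\beta)}\langle\mathbf{C}',\pi\rangle=\sum_{i=1}^n\min(\alpha_i,\beta_i)\,\mathbf{C}'_{ii},$$ where $\Pi(\alpha,\beta)=\{\pi\in\mathbb{R}_{+}^{n\times n}:\pi\mathbf{1}_n=\alpha,\ \pi^{\top}\mathbf{1}_n=\beta\}$ and $\langle\mathbf{C}',\pi\rangle=\sum_{i,j}\mathbf{C}'_{ij}\pi_{ij}$. *)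

theory Defs
  imports Complex_Main
begin

text \<open>Vectors in R^n are functions nat => real read on indices 0..n-1;
n x n matrices are functions nat => nat => real read on indices below n.\<close>

definition prob_vec :: "nat \<Rightarrow> (nat \<Rightarrow> real) \<Rightarrow> bool" where
  "prob_vec n a \<longleftrightarrow> (\<forall>i<n. a i \<ge> 0) \<and> (\<Sum>i<n. a i) = 1"

definition couplings :: "nat \<Rightarrow> (nat \<Rightarrow> real) \<Rightarrow> (nat \<Rightarrow> real) \<Rightarrow> (nat \<Rightarrow> nat \<Rightarrow> real) set" where
  "couplings n a b = {p. (\<forall>i<n. \<forall>j<n. p i j \<ge> 0) \<and>
      (\<forall>i<n. (\<Sum>j<n. p i j) = a i) \<and> (\<forall>j<n. (\<Sum>i<n. p i j) = b j)}"

definition frob :: "nat \<Rightarrow> (nat \<Rightarrow> nat \<Rightarrow> real) \<Rightarrow> (nat \<Rightarrow> nat \<Rightarrow> real) \<Rightarrow> real" where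
  "frob n C p = (\<Sum>i<n. \<Sum>j<n. C i j * p i j)"

end

theory Submission
  imports Defs
begin

text \<open>Since the cost is diagonal and nonpositive, only the mass a coupling keeps on the diagonal
  matters, and the more the better. The diagonal entry p i i is bounded by both marginals a i and
  b i, which gives the lower bound. It is attained by the maximal coupling: put min (a i) (b i) on
  the diagonal and spread the leftover masses a - min a b and b - min a b as an independent
  (product) coupling. The two leftovers have disjoint supports, so the product part adds nothing
  to the diagonal.\<close>

lemma frob_diagonal:
  assumes "\<forall>i<n. \<forall>j<n. i \<noteq> j \<longrightarrow> C i j = 0"
  shows "frob n C p = (\<Sum>i<n. C i i * p i i)"
  unfolding frob_def
proof (rule sum.cong[OF refl])
  fix i assume i: "i \<in> {..<n}"
  have "(\<Sum>j<n. C i j * p i j) = (\<Sum>j\<in>{i}. C i j * p i j)"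
    by (rule sum.mono_neutral_right) (use i assms in auto)
  then show "(\<Sum>j<n. C i j * p i j) = C i i * p i i" by simp
qed

lemma coupling_diagonal_le_min:
  assumes "p \<in> couplings n a b" and "i < n"
  shows "p i i \<le> min (a i) (b i)"
proof -
  have "p i i \<le> (\<Sum>j<n. p i j)"
    by (rule member_le_sum) (use assms in \<open>auto simp: couplings_def\<close>)
  moreover have "p i i \<le> (\<Sum>k<n. p k i)"
    by (rule member_le_sum[where f = "\<lambda>k. p k i"]) (use assms in \<open>auto simp: couplings_def\<close>)
  ultimately show ?thesis
    using assms by (simp add: couplings_def)
qed

lemma frob_diagonal_nonpos_ge:
  assumes "p \<in> couplings n a b"
    and "\<forall>i<n. \<forall>j<n. i \<noteq> j \<longrightarrow> C i j = 0" and "\<forall>i<n. C i i \<le> 0"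
  shows "(\<Sum>i<n. min (a i) (b i) * C i i) \<le> frob n C p"
  unfolding frob_diagonal[OF assms(2)]
proof (rule sum_mono)
  fix i assume "i \<in> {..<n}"
  then show "min (a i) (b i) * C i i \<le> C i i * p i i"
    using coupling_diagonal_le_min[OF assms(1)] assms(3)
    by (simp add: mult.commute mult_left_mono_neg)
qed

text \<open>When the leftover mass is 0, the division by 0 yields 0, which is still the right value.\<close>

definition maximal_coupling :: "nat \<Rightarrow> (nat \<Rightarrow> real) \<Rightarrow> (nat \<Rightarrow> real) \<Rightarrow> nat \<Rightarrow> nat \<Rightarrow> real"
  where "maximal_coupling n a b i j =
    (if i = j then min (a i) (b i) else 0)
    + (a i - min (a i) (b i)) * (b j - min (a j) (b j)) / (\<Sum>k<n. a k - min (a k) (b k))"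

lemma nonneg_mult_sum_divide_sum:
  fixes f :: "'a \<Rightarrow> real"
  assumes "finite A" and "\<forall>x\<in>A. 0 \<le> f x" and "i \<in> A"
  shows "f i * sum f A / sum f A = f i"
proof (cases "sum f A = 0")
  case True
  then show ?thesis
    using assms by (simp add: sum_nonneg_eq_0_iff)
qed simp

lemma maximal_coupling_diagonal: "maximal_coupling n a b i i = min (a i) (b i)"
  by (simp add: maximal_coupling_def min_def)

lemma maximal_coupling_in_couplings:
  assumes "\<forall>i<n. 0 \<le> a i" and "\<forall>i<n. 0 \<le> b i" and "(\<Sum>i<n. a i) = (\<Sum>i<n. b i)"
  shows "maximal_coupling n a b \<in> couplings n a b"
proof -
  define m where "m i = min (a i) (b i)" for i
  define r where "r i = a i - m i" for i
  define s where "s i = b i - m i" for i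
  have r_nonneg: "\<forall>i\<in>{..<n}. 0 \<le> r i" and s_nonneg: "\<forall>i\<in>{..<n}. 0 \<le> s i"
    by (simp_all add: r_def s_def m_def)
  have leftovers_equal: "(\<Sum>i<n. s i) = (\<Sum>i<n. r i)"
    using assms(3) by (simp add: r_def s_def sum_subtractf)
  have p_eq: "maximal_coupling n a b i j =
      (if i = j then m i else 0) + r i * s j / (\<Sum>k<n. r k)" for i j
    by (simp add: maximal_coupling_def m_def r_def s_def)
  show ?thesis
    unfolding couplings_def p_eq
  proof (intro CollectI conjI allI impI)
    fix i j assume "i < n" "j < n"
    then show "0 \<le> (if i = j then m i else 0) + r i * s j / (\<Sum>k<n. r k)"
      using assms r_nonneg s_nonneg
      by (auto simp: m_def intro!: add_nonneg_nonneg divide_nonneg_nonneg sum_nonneg)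
  next
    fix i assume "i < n"
    then have "(\<Sum>j<n. (if i = j then m i else 0) + r i * s j / (\<Sum>k<n. r k))
        = m i + r i * (\<Sum>k<n. r k) / (\<Sum>k<n. r k)"
      by (simp add: sum.distrib sum_divide_distrib[symmetric] sum_distrib_left[symmetric]
          leftovers_equal)
    also have "\<dots> = m i + r i"
      using \<open>i < n\<close> by (simp add: nonneg_mult_sum_divide_sum[OF _ r_nonneg])
    also have "\<dots> = a i"
      by (simp add: r_def)
    finally show "(\<Sum>j<n. (if i = j then m i else 0) + r i * s j / (\<Sum>k<n. r k)) = a i" .
  next
    fix j assume "j < n"
    then have "(\<Sum>i<n. (if i = j then m i else 0) + r i * s j / (\<Sum>k<n. r k))
        = m j + (\<Sum>k<n. r k) * s j / (\<Sum>k<n. r k)"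
      by (simp add: sum.distrib sum_divide_distrib[symmetric] sum_distrib_right[symmetric])
    also have "\<dots> = m j + s j * (\<Sum>k<n. s k) / (\<Sum>k<n. s k)"
      by (simp add: leftovers_equal mult.commute)
    also have "\<dots> = m j + s j"
      using \<open>j < n\<close> by (simp add: nonneg_mult_sum_divide_sum[OF _ s_nonneg])
    also have "\<dots> = b j"
      by (simp add: s_def)
    finally show "(\<Sum>i<n. (if i = j then m i else 0) + r i * s j / (\<Sum>k<n. r k)) = b j" .
  qed
qed

theorem lemma1:
  fixes n :: nat and a b :: "nat \<Rightarrow> real" and C :: "nat \<Rightarrow> nat \<Rightarrow> real"
  assumes "prob_vec n a" and "prob_vec n b"
    and "\<forall>i<n. \<forall>j<n. i \<noteq> j \<longrightarrow> C i j = 0"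
    and "\<forall>i<n. C i i \<le> 0"
  shows "(\<exists>p\<in>couplings n a b. frob n C p = (\<Sum>i<n. min (a i) (b i) * C i i))
       \<and> (\<forall>p\<in>couplings n a b. (\<Sum>i<n. min (a i) (b i) * C i i) \<le> frob n C p)"
proof
  have "maximal_coupling n a b \<in> couplings n a b"
    using assms(1,2) by (intro maximal_coupling_in_couplings) (auto simp: prob_vec_def)
  moreover have "frob n C (maximal_coupling n a b) = (\<Sum>i<n. min (a i) (b i) * C i i)"
    by (simp add: frob_diagonal[OF assms(3)] maximal_coupling_diagonal mult.commute)
  ultimately show "\<exists>p\<in>couplings n a b. frob n C p = (\<Sum>i<n. min (a i) (b i) * C i i)"
    by blast
qed (use frob_diagonal_nonpos_ge assms(3,4) in blast)

end
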